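(* In the setting of the context, Axiom (P2) holds for the projection distances $\{d_a\mid a\in C\}$ with any $\theta\ge4\delta$: for pairwise distinct $a,b,c\in C$, if $d_a(b,c)>\theta$ then $d_b(a,c)\le\theta$.
   Context: $X$ is a $\delta$-hyperbolic geodesic metric space ($\delta>0$, every geodesic triangle $\delta$-thin). $G$ acts on $X$ by isometries and $\mathcal{C}=(C,\{G_c\})$ is a $\rho$-separated fairly rotating family with $\rho\ge20\delta$ (i.e. $C\subseteq X$ is $G$-invariant, $G_c$ fixes $c$, $G_{gc}=gG_cg^{-1}$, distinct points of $C$ are at distance $\ge\rho$, and for $c\in C$, $g\in G_c\setminus\{1\}$, $x\in C\setminus\{c\}$ some geodesic from $x$ to $gx$ meets the closed $1$-ball about $c$). Fix $2+2\delta\le R\le\frac\rho2-3\delta$; $B_r(p)$ denotes the open ball. For $p\in C$, $S_p=\{x:d(x,p)=R\}$ with metric $d_{S_p}(x,y)=$ infimum of lengths of paths from $x$ to $y$ in $X\setminus B_R(p)$ (possibly $\infty$). For $x\in C\setminus\{p\}$, $\pi_p(x)\subseteq S_p$ is the set of points where geodesics $[p,x]$ meet $S_p$, and $d_p(x,y)=\operatorname{diam}_{S_p}(\pi_p(x)\cup\pi_p(y))$. *)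

theory Defs
  imports "HOL-Analysis.Analysis" "HOL-Algebra.Group"
begin

(* X is the whole metric space type 'a. *)

definition geodesic_seg :: "(real \<Rightarrow> 'a::metric_space) \<Rightarrow> 'a \<Rightarrow> 'a \<Rightarrow> bool" where
  "geodesic_seg \<gamma> x y \<longleftrightarrow> \<gamma> 0 = x \<and> \<gamma> (dist x y) = y \<and>
     (\<forall>s\<in>{0..dist x y}. \<forall>t\<in>{0..dist x y}. dist (\<gamma> s) (\<gamma> t) = \<bar>s - t\<bar>)"

definition geod_image :: "(real \<Rightarrow> 'a::metric_space) \<Rightarrow> 'a \<Rightarrow> 'a \<Rightarrow> 'a set" where
  "geod_image \<gamma> x y = \<gamma> ` {0..dist x y}"

definition geodesic_space :: "'a::metric_space itself \<Rightarrow> bool" where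
  "geodesic_space _ \<longleftrightarrow> (\<forall>x y::'a. \<exists>\<gamma>. geodesic_seg \<gamma> x y)"

definition cnbhd :: "real \<Rightarrow> 'a::metric_space set \<Rightarrow> 'a set" where
  "cnbhd r A = {z. \<exists>a\<in>A. dist z a \<le> r}"

definition hyperbolic :: "real \<Rightarrow> 'a::metric_space itself \<Rightarrow> bool" where
  "hyperbolic \<delta> _ \<longleftrightarrow> (\<forall>(x::'a) y z \<alpha> \<beta> \<gamma>.
     geodesic_seg \<alpha> x y \<and> geodesic_seg \<beta> y z \<and> geodesic_seg \<gamma> z x \<longrightarrow>
       geod_image \<alpha> x y \<subseteq> cnbhd \<delta> (geod_image \<beta> y z \<union> geod_image \<gamma> z x) \<and>
       geod_image \<beta> y z \<subseteq> cnbhd \<delta> (geod_image \<gamma> z x \<union> geod_image \<alpha> x y) \<and>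
       geod_image \<gamma> z x \<subseteq> cnbhd \<delta> (geod_image \<alpha> x y \<union> geod_image \<beta> y z))"

definition isometric_action :: "('g, 'b) monoid_scheme \<Rightarrow> ('g \<Rightarrow> 'a::metric_space \<Rightarrow> 'a) \<Rightarrow> bool" where
  "isometric_action G act \<longleftrightarrow>
     act \<one>\<^bsub>G\<^esub> = id \<and>
     (\<forall>g\<in>carrier G. \<forall>h\<in>carrier G. act (g \<otimes>\<^bsub>G\<^esub> h) = act g \<circ> act h) \<and>
     (\<forall>g\<in>carrier G. \<forall>x y. dist (act g x) (act g y) = dist x y)"

definition fairly_rotating_family ::
  "('g, 'b) monoid_scheme \<Rightarrow> ('g \<Rightarrow> 'a::metric_space \<Rightarrow> 'a) \<Rightarrow> 'a set \<Rightarrow> ('a \<Rightarrow> 'g set) \<Rightarrow> real \<Rightarrow> bool" where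
  "fairly_rotating_family G act C Gc \<rho> \<longleftrightarrow>
     (\<forall>g\<in>carrier G. \<forall>c\<in>C. act g c \<in> C) \<and>
     (\<forall>c\<in>C. subgroup (Gc c) G) \<and>
     (\<forall>c\<in>C. \<forall>g\<in>Gc c. act g c = c) \<and>
     (\<forall>c\<in>C. \<forall>g\<in>carrier G. Gc (act g c) = (\<lambda>h. g \<otimes>\<^bsub>G\<^esub> h \<otimes>\<^bsub>G\<^esub> inv\<^bsub>G\<^esub> g) ` Gc c) \<and>
     (\<forall>c\<in>C. \<forall>c'\<in>C. c \<noteq> c' \<longrightarrow> dist c c' \<ge> \<rho>) \<and>
     (\<forall>c\<in>C. \<forall>g\<in>Gc c - {\<one>\<^bsub>G\<^esub>}. \<forall>x\<in>C - {c}.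
        \<exists>\<gamma>. geodesic_seg \<gamma> x (act g x) \<and> geod_image \<gamma> x (act g x) \<inter> cball c 1 \<noteq> {})"

definition path_len :: "(real \<Rightarrow> 'a::metric_space) \<Rightarrow> ereal" where
  "path_len \<gamma> = (SUP (n, t) \<in> {(n::nat, t::nat \<Rightarrow> real). t 0 = 0 \<and> t n = 1 \<and>
        (\<forall>i<n. t i \<le> t (Suc i))}.
       ereal (\<Sum>i<n. dist (\<gamma> (t i)) (\<gamma> (t (Suc i)))))"

(* induced path metric on S_p: inf of lengths of paths from x to y in X \ B_R(p)
   (possibly infinity; Inf {} = infinity) *)
definition dS :: "real \<Rightarrow> 'a::metric_space \<Rightarrow> 'a \<Rightarrow> 'a \<Rightarrow> ereal" where
  "dS R p x y = (INF \<gamma> \<in> {\<gamma>. continuous_on {0..1} \<gamma> \<and> \<gamma> 0 = x \<and> \<gamma> 1 = y \<and>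
        \<gamma> ` {0..1} \<subseteq> - ball p R}. path_len \<gamma>)"

definition Sph :: "real \<Rightarrow> 'a::metric_space \<Rightarrow> 'a set" where
  "Sph R p = {x. dist x p = R}"

definition proj :: "real \<Rightarrow> 'a::metric_space \<Rightarrow> 'a \<Rightarrow> 'a set" where
  "proj R p x = {z \<in> Sph R p. \<exists>\<gamma>. geodesic_seg \<gamma> p x \<and> z \<in> geod_image \<gamma> p x}"

definition projdist :: "real \<Rightarrow> 'a::metric_space \<Rightarrow> 'a \<Rightarrow> 'a \<Rightarrow> ereal" where
  "projdist R p x y = (SUP u \<in> proj R p x \<union> proj R p y. SUP v \<in> proj R p x \<union> proj R p y. dS R p u v)"

end

theory Submission
  imports Defs
begin

text \<open>If the geodesics \<open>[a, b]\<close> and \<open>[a, c]\<close> are still \<open>2 * \<delta>\<close>-close at distance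
  \<open>R + \<delta>\<close> from \<open>a\<close>, their points on \<open>S\<^sub>a\<close> are joined outside \<open>B\<^sub>R(a)\<close> by a path of
  length \<open>4 * \<delta>\<close>; otherwise thinness of the triangle \<open>a b c\<close> forces the Gromov product
  \<open>(b | c)\<^sub>a\<close> to be at most \<open>R + 2 * \<delta>\<close>. So \<open>d\<^sub>a(b, c) > \<theta>\<close> gives a small Gromov product
  at \<open>a\<close>. Small Gromov products at both \<open>a\<close> and \<open>b\<close> would add up to
  \<open>d(a, b) \<le> 2 * R + 4 * \<delta>\<close>, contradicting \<open>\<rho>\<close>-separation, so \<open>d\<^sub>b(a, c) \<le> 4 * \<delta> \<le> \<theta>\<close>.\<close>

lemma geodesic_seg_dist:
  "geodesic_seg g x y \<Longrightarrow> s \<in> {0..dist x y} \<Longrightarrow> t \<in> {0..dist x y} \<Longrightarrow> dist (g s) (g t) = \<bar>s - t\<bar>"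
  by (simp add: geodesic_seg_def)

lemma geodesic_seg_dist_start:
  assumes "geodesic_seg g x y" "s \<in> {0..dist x y}"
  shows "dist x (g s) = s"
  using geodesic_seg_dist[OF assms(1), of 0 s] assms by (simp add: geodesic_seg_def)

lemma geodesic_seg_dist_end:
  assumes "geodesic_seg g x y" "s \<in> {0..dist x y}"
  shows "dist (g s) y = dist x y - s"
  using geodesic_seg_dist[OF assms(1), of s "dist x y"] assms by (simp add: geodesic_seg_def)

lemma geodesic_seg_reverse:
  assumes "geodesic_seg g x y"
  shows "geodesic_seg (\<lambda>s. g (dist x y - s)) y x"
    and "geod_image (\<lambda>s. g (dist x y - s)) y x = geod_image g x y"
proof -
  show "geodesic_seg (\<lambda>s. g (dist x y - s)) y x"
    using assms unfolding geodesic_seg_def by (auto simp: dist_commute)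
  have "(\<lambda>s. dist x y - s) ` {0..dist x y} = {0..dist x y}"
    by (auto intro!: image_eqI[where x = "dist x y - s" for s])
  then show "geod_image (\<lambda>s. g (dist x y - s)) y x = geod_image g x y"
    unfolding geod_image_def by (metis (no_types) dist_commute image_image)
qed

lemma geodesic_seg_affine_lipschitz:
  assumes "geodesic_seg g x y" and "\<And>t. t \<in> {a..b} \<Longrightarrow> s\<^sub>0 + k * t \<in> {0..dist x y}"
  shows "\<bar>k\<bar>-lipschitz_on {a..b} (\<lambda>t. g (s\<^sub>0 + k * t))"
proof (rule lipschitz_onI)
  fix s t assume "s \<in> {a..b}" "t \<in> {a..b}"
  then have "dist (g (s\<^sub>0 + k * s)) (g (s\<^sub>0 + k * t)) = \<bar>k * s - k * t\<bar>"
    using geodesic_seg_dist[OF assms(1)] assms(2) by simp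
  then show "dist (g (s\<^sub>0 + k * s)) (g (s\<^sub>0 + k * t)) \<le> \<bar>k\<bar> * dist s t"
    by (simp add: dist_real_def abs_mult right_diff_distrib[symmetric])
qed simp

lemma path_len_le_lipschitz:
  assumes "L-lipschitz_on {0..1} f"
  shows "path_len f \<le> ereal L"
  unfolding path_len_def
proof (rule SUP_least, clarify)
  fix n :: nat and t :: "nat \<Rightarrow> real"
  assume t0: "t 0 = 0" and tn: "t n = 1" and mono: "\<forall>i<n. t i \<le> t (Suc i)"
  have t_mono: "t i \<le> t j" if "i \<le> j" "j \<le> n" for i j
    using that by (induction j rule: dec_induct) (auto intro: order_trans simp: mono)
  have "(\<Sum>i<n. dist (f (t i)) (f (t (Suc i)))) \<le> (\<Sum>i<n. L * (t (Suc i) - t i))"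
  proof (rule sum_mono)
    fix i assume "i \<in> {..<n}"
    then have "t i \<in> {0..1}" "t (Suc i) \<in> {0..1}" "t i \<le> t (Suc i)"
      using t_mono[of 0 i] t_mono[of i n] t_mono[of 0 "Suc i"] t_mono[of "Suc i" n] t0 tn mono
      by auto
    then show "dist (f (t i)) (f (t (Suc i))) \<le> L * (t (Suc i) - t i)"
      using lipschitz_onD[OF assms, of "t i" "t (Suc i)"] by (simp add: dist_real_def)
  qed
  also have "\<dots> = L * (t n - t 0)"
    by (simp add: sum_distrib_left[symmetric] sum_lessThan_telescope)
  finally show "ereal (\<Sum>i<n. dist (f (t i)) (f (t (Suc i)))) \<le> ereal L"
    using t0 tn by simp
qed

lemma dS_le_lipschitz_path:
  fixes f :: "real \<Rightarrow> 'a::metric_space"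
  assumes "L-lipschitz_on {0..1} f" "f 0 = x" "f 1 = y"
    and "\<And>t. t \<in> {0..1} \<Longrightarrow> R \<le> dist p (f t)"
  shows "dS R p x y \<le> ereal L"
proof -
  have "dS R p x y \<le> path_len f"
    unfolding dS_def
    using assms lipschitz_on_continuous_on[OF assms(1)]
    by (intro INF_lower) (force simp: not_less)
  also have "\<dots> \<le> ereal L"
    using path_len_le_lipschitz[OF assms(1)] .
  finally show ?thesis .
qed

lemma geodesic_seg_short_avoids_ball:
  assumes "geodesic_seg \<sigma> u v" "dist u v \<le> 2 * e" "R + e \<le> dist p u" "R + e \<le> dist p v"
    and "s \<in> {0..dist u v}"
  shows "R \<le> dist p (\<sigma> s)"
  using dist_triangle[of p u "\<sigma> s"] dist_triangle[of p v "\<sigma> s"] assms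
    geodesic_seg_dist_start[OF assms(1,5)] geodesic_seg_dist_end[OF assms(1,5)]
  by (simp add: dist_commute)

text \<open>The path goes out along \<open>\<alpha>\<close> from radius \<open>R\<close> to \<open>R + \<delta>\<close>, crosses over
  by a geodesic of length at most \<open>2 * \<delta>\<close>, and comes back along \<open>\<gamma>\<close>; parametrising the
  three pieces over \<open>[0, 1/4]\<close>, \<open>[1/4, 3/4]\<close>, \<open>[3/4, 1]\<close> makes it \<open>4 * \<delta>\<close>-Lipschitz.\<close>

lemma dS_le_if_geodesics_close:
  fixes p y z :: "'a::metric_space"
  assumes geo: "geodesic_space TYPE('a)"
    and ga: "geodesic_seg \<alpha> p y" and gc: "geodesic_seg \<gamma> p z"
    and y_far: "R + \<delta> \<le> dist p y" and z_far: "R + \<delta> \<le> dist p z" and "0 \<le> R" "0 \<le> \<delta>"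
    and close: "dist (\<alpha> (R + \<delta>)) (\<gamma> (R + \<delta>)) \<le> 2 * \<delta>"
  shows "dS R p (\<alpha> R) (\<gamma> R) \<le> ereal (4 * \<delta>)"
proof -
  define u v where "u = \<alpha> (R + \<delta>)" and "v = \<gamma> (R + \<delta>)"
  define l where "l = dist u v"
  obtain \<sigma> where gs: "geodesic_seg \<sigma> u v"
    using geo unfolding geodesic_space_def by blast
  define A where "A t = \<alpha> (R + (4 * \<delta>) * t)" for t
  define M where "M t = \<sigma> (- l / 2 + (2 * l) * t)" for t
  define B where "B t = \<gamma> ((R + 4 * \<delta>) + (- 4 * \<delta>) * t)" for t
  define f where "f t = (if t \<le> 1/4 then A t else if t \<le> 3/4 then M t else B t)" for t
  have l: "0 \<le> l" "l \<le> 2 * \<delta>"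
    using close by (simp_all add: l_def u_def v_def)
  have A_param: "R + 4 * \<delta> * t \<in> {R..R + \<delta>}" if "t \<in> {0..1/4}" for t
    using that mult_left_mono[of t "1/4" "4 * \<delta>"] \<open>0 \<le> \<delta>\<close> by auto
  have M_param: "- l / 2 + 2 * l * t \<in> {0..l}" if "t \<in> {1/4..3/4}" for t
    using that mult_left_mono[of "1/4" t "2 * l"] mult_left_mono[of t "3/4" "2 * l"] l by auto
  have B_param: "R + 4 * \<delta> + - 4 * \<delta> * t \<in> {R..R + \<delta>}" if "t \<in> {3/4..1}" for t
    using that mult_left_mono[of "3/4" t "4 * \<delta>"] mult_left_mono[of t 1 "4 * \<delta>"] \<open>0 \<le> \<delta>\<close> by auto
  have A_range: "R + 4 * \<delta> * t \<in> {0..dist p y}" if "t \<in> {0..1/4}" for t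
    using A_param[OF that] y_far \<open>0 \<le> R\<close> by auto
  have B_range: "R + 4 * \<delta> + - 4 * \<delta> * t \<in> {0..dist p z}" if "t \<in> {3/4..1}" for t
    using B_param[OF that] z_far \<open>0 \<le> R\<close> by auto
  have A_lip: "(4 * \<delta>)-lipschitz_on {0..1/4} A"
    using geodesic_seg_affine_lipschitz[OF ga A_range] \<open>0 \<le> \<delta>\<close> unfolding A_def by simp
  have "\<bar>2 * l\<bar>-lipschitz_on {1/4..3/4} M"
    using geodesic_seg_affine_lipschitz[OF gs M_param[unfolded l_def]] unfolding M_def l_def .
  then have M_lip: "(4 * \<delta>)-lipschitz_on {1/4..3/4} M"
    by (rule lipschitz_on_le) (use l in simp)
  have B_lip: "(4 * \<delta>)-lipschitz_on {3/4..1} B"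
    using geodesic_seg_affine_lipschitz[OF gc B_range] \<open>0 \<le> \<delta>\<close> unfolding B_def by simp
  have "A (1/4) = M (1/4)" "M (3/4) = B (3/4)"
    using gs by (simp_all add: A_def M_def B_def geodesic_seg_def u_def v_def l_def add.commute)
  then have f_lip: "(4 * \<delta>)-lipschitz_on {0..1} f"
    using lipschitz_on_concat[OF A_lip lipschitz_on_concat[OF M_lip B_lip]] unfolding f_def
    by simp
  have "R \<le> dist p (f t)" if "t \<in> {0..1}" for t
  proof -
    have "R \<le> dist p (A t)" if "t \<in> {0..1/4}"
      using geodesic_seg_dist_start[OF ga A_range[OF that]] A_param[OF that] unfolding A_def by simp
    moreover have "R \<le> dist p (M t)" if "t \<in> {1/4..3/4}"
    proof -
      have "dist p u = R + \<delta>" "dist p v = R + \<delta>"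
        using geodesic_seg_dist_start[OF ga, of "R + \<delta>"] geodesic_seg_dist_start[OF gc, of "R + \<delta>"]
          y_far z_far \<open>0 \<le> R\<close> \<open>0 \<le> \<delta>\<close> unfolding u_def v_def by auto
      then show ?thesis
        using geodesic_seg_short_avoids_ball[OF gs _ _ _ M_param[OF that, unfolded l_def]] l
        unfolding M_def l_def by simp
    qed
    moreover have "R \<le> dist p (B t)" if "t \<in> {3/4..1}"
      using geodesic_seg_dist_start[OF gc B_range[OF that]] B_param[OF that] unfolding B_def by simp
    ultimately show ?thesis
      using that unfolding f_def by auto
  qed
  moreover have "f 0 = \<alpha> R" "f 1 = \<gamma> R"
    by (simp_all add: f_def A_def B_def)
  ultimately show ?thesis
    using dS_le_lipschitz_path[OF f_lip] by blast
qed

lemma hyperbolic_side_subset_cnbhd: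
  fixes p y z :: "'a::metric_space"
  assumes "hyperbolic \<delta> TYPE('a)"
    and "geodesic_seg \<alpha> p y" "geodesic_seg \<beta> y z" "geodesic_seg \<gamma> p z"
  shows "geod_image \<alpha> p y \<subseteq> cnbhd \<delta> (geod_image \<beta> y z \<union> geod_image \<gamma> p z)"
  using assms(1)[unfolded hyperbolic_def, rule_format, OF conjI[OF assms(2) conjI[OF assms(3)
        geodesic_seg_reverse(1)[OF assms(4)]]]]
  by (simp add: geodesic_seg_reverse(2)[OF assms(4)])

text \<open>The point of \<open>[p, y]\<close> at distance \<open>R + \<delta>\<close> from \<open>p\<close> is \<open>\<delta>\<close>-close either to
  \<open>[p, z]\<close>, and then to the point of \<open>[p, z]\<close> at the same distance from \<open>p\<close>, or to
  \<open>[y, z]\<close>, which then passes within \<open>R + 2 * \<delta>\<close> of \<open>p\<close>.\<close>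

lemma geodesics_close_or_gromov_product_le:
  fixes p y z :: "'a::metric_space"
  assumes geo: "geodesic_space TYPE('a)" and hyp: "hyperbolic \<delta> TYPE('a)"
    and ga: "geodesic_seg \<alpha> p y" and gc: "geodesic_seg \<gamma> p z"
    and "R + \<delta> \<le> dist p y" "R + \<delta> \<le> dist p z" "0 \<le> R" "0 \<le> \<delta>"
  shows "dist (\<alpha> (R + \<delta>)) (\<gamma> (R + \<delta>)) \<le> 2 * \<delta>
    \<or> dist p y + dist p z \<le> dist y z + 2 * R + 4 * \<delta>"
proof -
  obtain \<beta> where gb: "geodesic_seg \<beta> y z"
    using geo unfolding geodesic_space_def by blast
  have "\<alpha> (R + \<delta>) \<in> geod_image \<alpha> p y"
    unfolding geod_image_def using assms by auto
  then obtain w where w: "w \<in> geod_image \<beta> y z \<union> geod_image \<gamma> p z" "dist (\<alpha> (R + \<delta>)) w \<le> \<delta>"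
    using hyperbolic_side_subset_cnbhd[OF hyp ga gb gc] unfolding cnbhd_def by blast
  have du: "dist p (\<alpha> (R + \<delta>)) = R + \<delta>"
    using geodesic_seg_dist_start[OF ga, of "R + \<delta>"] assms by simp
  show ?thesis
  proof (cases "w \<in> geod_image \<gamma> p z")
    case True
    then obtain s where s: "s \<in> {0..dist p z}" "w = \<gamma> s"
      unfolding geod_image_def by auto
    have "dist p w = s"
      using geodesic_seg_dist_start[OF gc s(1)] s(2) by simp
    then have "\<bar>s - (R + \<delta>)\<bar> \<le> \<delta>"
      using dist_triangle[of p "\<alpha> (R + \<delta>)" w] dist_triangle[of p w "\<alpha> (R + \<delta>)"] du w(2)
      by (simp add: dist_commute abs_le_iff)
    moreover have "dist w (\<gamma> (R + \<delta>)) = \<bar>s - (R + \<delta>)\<bar>"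
      using geodesic_seg_dist[OF gc s(1), of "R + \<delta>"] s(2) assms by simp
    ultimately show ?thesis
      using dist_triangle[of "\<alpha> (R + \<delta>)" "\<gamma> (R + \<delta>)" w] w(2) by simp
  next
    case False
    then obtain s where s: "s \<in> {0..dist y z}" "w = \<beta> s"
      using w(1) unfolding geod_image_def by auto
    have "dist y w = s" "dist w z = dist y z - s"
      using geodesic_seg_dist_start[OF gb s(1)] geodesic_seg_dist_end[OF gb s(1)] s(2) by simp_all
    moreover have "dist p w \<le> R + 2 * \<delta>"
      using dist_triangle[of p w "\<alpha> (R + \<delta>)"] du w(2) by simp
    ultimately show ?thesis
      using dist_triangle[of p y w] dist_triangle[of p z w] by (simp add: dist_commute)
  qed
qed

lemma proj_obtain_geodesic:
  assumes "u \<in> proj R p x" "0 \<le> R"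
  obtains \<alpha> where "geodesic_seg \<alpha> p x" "u = \<alpha> R" "R \<le> dist p x"
proof -
  obtain \<alpha> s where ga: "geodesic_seg \<alpha> p x" and s: "s \<in> {0..dist p x}" "u = \<alpha> s"
    and du: "dist u p = R"
    using assms(1) unfolding proj_def Sph_def geod_image_def by auto
  have "s = R"
    using geodesic_seg_dist_start[OF ga s(1)] s(2) du by (simp add: dist_commute)
  then show thesis
    using that ga s by auto
qed

lemma dS_proj_le_or_gromov_product_le:
  fixes p y z :: "'a::metric_space"
  assumes geo: "geodesic_space TYPE('a)" and hyp: "hyperbolic \<delta> TYPE('a)"
    and "0 \<le> R" "0 \<le> \<delta>" and u: "u \<in> proj R p y" and v: "v \<in> proj R p z"
    and y_far: "R + \<delta> \<le> dist p y" and z_far: "R + \<delta> \<le> dist p z"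
  shows "dS R p u v \<le> ereal (4 * \<delta>) \<or> dist p y + dist p z \<le> dist y z + 2 * R + 4 * \<delta>"
proof -
  obtain \<alpha> \<gamma> where ga: "geodesic_seg \<alpha> p y" "u = \<alpha> R" and gc: "geodesic_seg \<gamma> p z" "v = \<gamma> R"
    using proj_obtain_geodesic[OF u \<open>0 \<le> R\<close>] proj_obtain_geodesic[OF v \<open>0 \<le> R\<close>] by metis
  then show ?thesis
    using geodesics_close_or_gromov_product_le[OF geo hyp ga(1) gc(1) y_far z_far assms(3,4)]
      dS_le_if_geodesics_close[OF geo ga(1) gc(1) y_far z_far assms(3,4)]
    by auto
qed

lemma projdist_le_if_gromov_product_gt:
  fixes p y z :: "'a::metric_space"
  assumes geo: "geodesic_space TYPE('a)" and hyp: "hyperbolic \<delta> TYPE('a)"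
    and "0 \<le> R" "0 \<le> \<delta>"
    and y_far: "R + 2 * \<delta> < dist p y" and z_far: "R + 2 * \<delta> < dist p z"
    and gromov: "dist y z + 2 * R + 4 * \<delta> < dist p y + dist p z"
  shows "projdist R p y z \<le> ereal (4 * \<delta>)"
  unfolding projdist_def
proof (intro SUP_least)
  fix u v assume "u \<in> proj R p y \<union> proj R p z" "v \<in> proj R p y \<union> proj R p z"
  then obtain y' z' where y': "y' \<in> {y, z}" "u \<in> proj R p y'" and z': "z' \<in> {y, z}" "v \<in> proj R p z'"
    by blast
  have "R + 2 * \<delta> < dist p y'" "R + 2 * \<delta> < dist p z'"
    using y' z' y_far z_far by auto
  moreover have "dist y' z' + 2 * R + 4 * \<delta> < dist p y' + dist p z'"
    using y' z' gromov calculation by (auto simp: dist_commute)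
  ultimately show "dS R p u v \<le> ereal (4 * \<delta>)"
    using dS_proj_le_or_gromov_product_le[OF geo hyp assms(3,4) y'(2) z'(2)] assms(4) by fastforce
qed

theorem lemma3p5:
  fixes G :: "('g, 'b) monoid_scheme"
    and act :: "'g \<Rightarrow> 'a::metric_space \<Rightarrow> 'a"
    and C :: "'a set" and Gc :: "'a \<Rightarrow> 'g set"
    and \<delta> \<rho> R \<theta> :: real
  assumes "geodesic_space TYPE('a)"
    and "\<delta> > 0"
    and "hyperbolic \<delta> TYPE('a)"
    and "group G"
    and "isometric_action G act"
    and "fairly_rotating_family G act C Gc \<rho>"
    and "\<rho> \<ge> 20 * \<delta>"
    and "2 + 2 * \<delta> \<le> R" and "R \<le> \<rho> / 2 - 3 * \<delta>"
    and "\<theta> \<ge> 4 * \<delta>"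
    and "a \<in> C" and "b \<in> C" and "c \<in> C"
    and "a \<noteq> b" and "a \<noteq> c" and "b \<noteq> c"
    and "projdist R a b c > ereal \<theta>"
  shows "projdist R b a c \<le> ereal \<theta>"
proof -
  note geo = assms(1) and hyp = assms(3)
  have "0 \<le> \<delta>" "0 \<le> R"
    using assms(2,8) by simp_all
  have far: "2 * R + 4 * \<delta> < dist x y" if "x \<in> C" "y \<in> C" "x \<noteq> y" for x y
    using assms(6) that assms(2,9) unfolding fairly_rotating_family_def by force
  then have ab: "2 * R + 4 * \<delta> < dist a b" and ac: "2 * R + 4 * \<delta> < dist a c"
    and bc: "2 * R + 4 * \<delta> < dist b c"
    using assms(11-16) by auto
  have "\<not> projdist R a b c \<le> ereal (4 * \<delta>)"
    using assms(10,17) by (meson ereal_less_eq(3) le_less_trans not_le)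
  then have "dist a b + dist a c \<le> dist b c + 2 * R + 4 * \<delta>"
    using projdist_le_if_gromov_product_gt[OF geo hyp \<open>0 \<le> R\<close> \<open>0 \<le> \<delta>\<close>, of a b c] ab ac \<open>0 \<le> R\<close> \<open>0 \<le> \<delta>\<close>
    by fastforce
  then have "projdist R b a c \<le> ereal (4 * \<delta>)"
    using projdist_le_if_gromov_product_gt[OF geo hyp \<open>0 \<le> R\<close> \<open>0 \<le> \<delta>\<close>, of b a c] ab bc \<open>0 \<le> R\<close> \<open>0 \<le> \<delta>\<close>
    by (simp add: dist_commute)
  then show ?thesis
    using assms(10) by (simp add: order_trans)
qed

end
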